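(* Let $v,\alpha,h\in\mathbb{R}^d$ with $|\alpha|\ge|h|$ and $\alpha\cdot h=0$. Then $$\mu(v-h)\mu(v+\alpha)=\mu(v)\mu(v+\alpha-h)\le\mu^{1/9}(v)\mu^{1/9}(v+\alpha),$$ $$\mu(v-h)\mu(v+\alpha-h)\le\mu^{1/20}(v)\mu^{1/20}(v+\alpha).$$
   Context: $\mu(v)=(2\pi)^{-d/2}e^{-|v|^2/2}$ is the standard Gaussian on $\mathbb{R}^d$. *)

theory Defs
  imports "HOL-Analysis.Analysis"
begin

definition gauss :: "'a::euclidean_space \<Rightarrow> real" where
  "gauss v = (2 * pi) powr (- real DIM('a) / 2) * exp (- (norm v)\<^sup>2 / 2)"

end

theory Submission
  imports Defs
begin

text \<open>Writing \<open>\<mu>(x) \<mu>(y) = c\<^sup>2 exp (-(|x|\<^sup>2 + |y|\<^sup>2)/2)\<close> with \<open>c = \<mu>(0) \<le> 1\<close>, a bound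
  \<open>\<mu>(x) \<mu>(y) \<le> \<mu>(a)\<^sup>r \<mu>(b)\<^sup>r\<close> follows from \<open>r (|a|\<^sup>2 + |b|\<^sup>2) \<le> |x|\<^sup>2 + |y|\<^sup>2\<close>.
  Orthogonality of \<open>\<alpha>\<close> and \<open>h\<close> makes \<open>|v-h|\<^sup>2 + |v+\<alpha>|\<^sup>2 = |v|\<^sup>2 + |v+\<alpha>-h|\<^sup>2\<close>, which gives the
  identity; the inequalities follow from \<open>|a+b|\<^sup>2 \<le> 2|a|\<^sup>2 + 2|b|\<^sup>2\<close> and \<open>|h| \<le> |\<alpha>|\<close>,
  in fact with the better exponents \<open>1/4\<close> and \<open>1/10\<close>.\<close>

lemma norm_add_squared_le:
  fixes a b :: "'a::real_normed_vector"
  shows "(norm (a + b))\<^sup>2 \<le> 2 * (norm a)\<^sup>2 + 2 * (norm b)\<^sup>2"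
proof -
  have "(norm (a + b))\<^sup>2 \<le> (norm a + norm b)\<^sup>2"
    by (simp add: norm_triangle_ineq power_mono)
  also have "\<dots> \<le> 2 * (norm a)\<^sup>2 + 2 * (norm b)\<^sup>2"
    using zero_le_power2[of "norm a - norm b"] by (simp add: power2_eq_square algebra_simps)
  finally show ?thesis .
qed

lemma gauss_eq_gauss_zero: "gauss (v::'a::euclidean_space) = gauss (0::'a) * exp (- (norm v)\<^sup>2 / 2)"
  by (simp add: gauss_def)

lemma gauss_zero_pos: "0 < gauss (0::'a::euclidean_space)"
  by (simp add: gauss_def)

lemma gauss_zero_le_one: "gauss (0::'a::euclidean_space) \<le> 1"
proof -
  have "1 \<le> (2 * pi) powr (real DIM('a) / 2)"
    using pi_gt3 by (intro ge_one_powr_ge_zero) auto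
  then show ?thesis
    by (simp add: gauss_def powr_minus_divide)
qed

lemma gauss_mult:
  "gauss (x::'a::euclidean_space) * gauss (y::'a) = (gauss (0::'a))\<^sup>2 * exp (- ((norm x)\<^sup>2 + (norm y)\<^sup>2) / 2)"
  by (subst (1 2) gauss_eq_gauss_zero) (simp add: power2_eq_square exp_add[symmetric] field_simps)

lemma gauss_mult_le_powr:
  fixes x y a b :: "'a::euclidean_space"
  assumes "0 < r" "r \<le> 1" and "r * ((norm a)\<^sup>2 + (norm b)\<^sup>2) \<le> (norm x)\<^sup>2 + (norm y)\<^sup>2"
  shows "gauss x * gauss y \<le> gauss a powr r * gauss b powr r"
proof -
  let ?c = "gauss (0::'a)"
  have c: "0 < ?c" "?c \<le> 1" by (fact gauss_zero_pos gauss_zero_le_one)+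
  have "?c \<le> ?c powr r"
    using powr_mono'[of r 1 ?c] c assms(2) by simp
  then have const: "?c\<^sup>2 \<le> (?c powr r)\<^sup>2"
    using c by (simp add: power_mono)
  have expo: "exp (- ((norm x)\<^sup>2 + (norm y)\<^sup>2) / 2) \<le> exp (- (r * ((norm a)\<^sup>2 + (norm b)\<^sup>2)) / 2)"
    using assms(3) by simp
  have "gauss x * gauss y \<le> (?c powr r)\<^sup>2 * exp (- (r * ((norm a)\<^sup>2 + (norm b)\<^sup>2)) / 2)"
    unfolding gauss_mult by (rule mult_mono[OF const expo]) auto
  also have "\<dots> = gauss a powr r * gauss b powr r"
    using c by (subst (1 2) gauss_eq_gauss_zero)
      (simp add: powr_mult exp_powr_real power2_eq_square exp_add[symmetric] field_simps)
  finally show ?thesis .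
qed

lemma norm_squared_exchange_orthogonal:
  fixes v \<alpha> h :: "'a::real_inner"
  assumes "\<alpha> \<bullet> h = 0"
  shows "(norm (v - h))\<^sup>2 + (norm (v + \<alpha>))\<^sup>2 = (norm v)\<^sup>2 + (norm (v + \<alpha> - h))\<^sup>2"
  using assms by (simp add: power2_norm_eq_inner inner_diff_left inner_diff_right
      inner_add_left inner_add_right inner_commute algebra_simps)

lemma norm_squared_sum_le_4:
  fixes v \<alpha> h :: "'a::real_inner"
  assumes "norm h \<le> norm \<alpha>" and "\<alpha> \<bullet> h = 0"
  shows "(norm v)\<^sup>2 + (norm (v + \<alpha>))\<^sup>2 \<le> 4 * ((norm v)\<^sup>2 + (norm (v + \<alpha> - h))\<^sup>2)"
proof -
  have "(norm (\<alpha> - h))\<^sup>2 = (norm \<alpha>)\<^sup>2 + (norm h)\<^sup>2"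
    using assms(2) by (simp add: power2_norm_eq_inner inner_diff_left inner_diff_right inner_commute)
  moreover have "(norm h)\<^sup>2 \<le> (norm \<alpha>)\<^sup>2"
    using assms(1) by (simp add: power_mono)
  moreover have "(norm (\<alpha> - h))\<^sup>2 \<le> 2 * (norm (v + \<alpha> - h))\<^sup>2 + 2 * (norm v)\<^sup>2"
    using norm_add_squared_le[of "v + \<alpha> - h" "- v"] by simp
  moreover have "(norm (v + \<alpha>))\<^sup>2 \<le> 2 * (norm (v + \<alpha> - h))\<^sup>2 + 2 * (norm h)\<^sup>2"
    using norm_add_squared_le[of "v + \<alpha> - h" h] by simp
  ultimately show ?thesis
    unfolding distrib_left using zero_le_power2[of "norm v"] by linarith
qed

lemma norm_squared_sum_le_10:
  fixes v \<alpha> h :: "'a::real_normed_vector"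
  assumes "norm h \<le> norm \<alpha>"
  shows "(norm v)\<^sup>2 + (norm (v + \<alpha>))\<^sup>2 \<le> 10 * ((norm (v - h))\<^sup>2 + (norm (v + \<alpha> - h))\<^sup>2)"
proof -
  have "(norm h)\<^sup>2 \<le> (norm \<alpha>)\<^sup>2"
    using assms by (simp add: power_mono)
  moreover have "(norm \<alpha>)\<^sup>2 \<le> 2 * (norm (v + \<alpha> - h))\<^sup>2 + 2 * (norm (v - h))\<^sup>2"
    using norm_add_squared_le[of "v + \<alpha> - h" "- (v - h)"] by (simp add: norm_minus_commute)
  moreover have "(norm v)\<^sup>2 \<le> 2 * (norm (v - h))\<^sup>2 + 2 * (norm h)\<^sup>2"
    using norm_add_squared_le[of "v - h" h] by simp
  moreover have "(norm (v + \<alpha>))\<^sup>2 \<le> 2 * (norm (v + \<alpha> - h))\<^sup>2 + 2 * (norm h)\<^sup>2"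
    using norm_add_squared_le[of "v + \<alpha> - h" h] by simp
  ultimately show ?thesis
    unfolding distrib_left by linarith
qed

theorem lemma3p3:
  fixes v \<alpha> h :: "'a::euclidean_space"
  assumes "norm \<alpha> \<ge> norm h" and "\<alpha> \<bullet> h = 0"
  shows "gauss (v - h) * gauss (v + \<alpha>) = gauss v * gauss (v + \<alpha> - h)
       \<and> gauss v * gauss (v + \<alpha> - h) \<le> gauss v powr (1/9) * gauss (v + \<alpha>) powr (1/9)
       \<and> gauss (v - h) * gauss (v + \<alpha> - h) \<le> gauss v powr (1/20) * gauss (v + \<alpha>) powr (1/20)"
proof (intro conjI)
  show "gauss (v - h) * gauss (v + \<alpha>) = gauss v * gauss (v + \<alpha> - h)"
    unfolding gauss_mult using norm_squared_exchange_orthogonal[OF assms(2)] by simp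
  show "gauss v * gauss (v + \<alpha> - h) \<le> gauss v powr (1/9) * gauss (v + \<alpha>) powr (1/9)"
  proof (rule gauss_mult_le_powr)
    show "1/9 * ((norm v)\<^sup>2 + (norm (v + \<alpha>))\<^sup>2) \<le> (norm v)\<^sup>2 + (norm (v + \<alpha> - h))\<^sup>2"
      using norm_squared_sum_le_4[OF assms, of v]
        zero_le_power2[of "norm v"] zero_le_power2[of "norm (v + \<alpha> - h)"]
      unfolding distrib_left by linarith
  qed auto
  show "gauss (v - h) * gauss (v + \<alpha> - h) \<le> gauss v powr (1/20) * gauss (v + \<alpha>) powr (1/20)"
  proof (rule gauss_mult_le_powr)
    show "1/20 * ((norm v)\<^sup>2 + (norm (v + \<alpha>))\<^sup>2) \<le> (norm (v - h))\<^sup>2 + (norm (v + \<alpha> - h))\<^sup>2"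
      using norm_squared_sum_le_10[OF assms(1), of v]
        zero_le_power2[of "norm (v - h)"] zero_le_power2[of "norm (v + \<alpha> - h)"]
      unfolding distrib_left by linarith
  qed auto
qed

end
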